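(* Let $n\in\mathbb{N}$, $y\in\{-1,+1\}^n$, $Y=\operatorname{diag}(y)$, let $K,\tilde K\in\mathbb{R}^{n\times n}$ be symmetric positive semidefinite matrices, $C>0$, $\gamma>0$, and define $F(\alpha)=\frac12\alpha^\top YKY\alpha-\mathbf 1^\top\alpha$ and $\tilde F(\tilde\alpha)=\frac12\tilde\alpha^\top\tilde K\tilde\alpha$. (i) If $(\alpha_1,\tilde\alpha_1)$ and $(\alpha_2,\tilde\alpha_2)$ are solutions of $$\min_{\alpha,\tilde\alpha\in\mathbb{R}^n}F(\alpha)+\tfrac1\gamma\tilde F(\tilde\alpha)\quad\text{s.t. } y^\top\alpha=0,\ \mathbf 1^\top\tilde\alpha=0,\ 0\le\alpha_i\le C+\tilde\alpha_i\ \forall i,$$ then $\alpha_1-\alpha_2\in\operatorname{Null}(YKY)\cap\mathbf 1^\perp\cap y^\perp$ and $\tilde\alpha_1-\tilde\alpha_2\in\operatorname{Null}(\tilde K)\cap\mathbf 1^\perp$. (ii) For $c\in\mathbb{R}^n_{\ge0}$, if $\alpha_1$ and $\alpha_2$ are solutions of $\min_\alpha F(\alpha)$ s.t. $y^\top\alpha=0$, $0\le\alpha_i\le c_i$ for all $i$, then $\alpha_1-\alpha_2\in\operatorname{Null}(YKY)\cap\mathbf 1^\perp\cap y^\perp$.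
   Context: $\mathbf 1$ is the all-ones vector; $v^\perp$ denotes the orthogonal complement of $v$ in $\mathbb{R}^n$. (These are the dual problems of SVM+ and of the weighted SVM, with $K$ and $\tilde K$ the kernel matrices of the decision and correcting features.) *)

theory Defs
  imports "HOL-Analysis.Analysis"
begin

definition diag_mat :: "real ^ 'n \<Rightarrow> real ^ 'n ^ 'n" where
  "diag_mat y = (\<chi> i j. if i = j then y $ i else 0)"

definition psd :: "real ^ 'n ^ 'n \<Rightarrow> bool" where
  "psd M \<longleftrightarrow> (\<forall>x. 0 \<le> x \<bullet> (M *v x))"

definition null_space :: "real ^ 'n ^ 'n \<Rightarrow> (real ^ 'n) set" where
  "null_space M = {v. M *v v = 0}"

definition orth_compl :: "real ^ 'n \<Rightarrow> (real ^ 'n) set" where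
  "orth_compl v = {w. v \<bullet> w = 0}"

definition svmF :: "real ^ 'n \<Rightarrow> real ^ 'n ^ 'n \<Rightarrow> real ^ 'n \<Rightarrow> real" where
  "svmF y K a = (1/2) * (a \<bullet> ((diag_mat y ** K ** diag_mat y) *v a)) - 1 \<bullet> a"

definition svmFt :: "real ^ 'n ^ 'n \<Rightarrow> real ^ 'n \<Rightarrow> real" where
  "svmFt Kt ta = (1/2) * (ta \<bullet> (Kt *v ta))"

definition svmplus_feasible :: "real ^ 'n \<Rightarrow> real \<Rightarrow> real ^ 'n \<Rightarrow> real ^ 'n \<Rightarrow> bool" where
  "svmplus_feasible y C a ta \<longleftrightarrow> y \<bullet> a = 0 \<and> 1 \<bullet> ta = 0 \<and>
     (\<forall>i. 0 \<le> a $ i \<and> a $ i \<le> C + ta $ i)"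

definition svmplus_solution ::
  "real ^ 'n \<Rightarrow> real ^ 'n ^ 'n \<Rightarrow> real ^ 'n ^ 'n \<Rightarrow> real \<Rightarrow> real \<Rightarrow> real ^ 'n \<Rightarrow> real ^ 'n \<Rightarrow> bool" where
  "svmplus_solution y K Kt C \<gamma> a ta \<longleftrightarrow> svmplus_feasible y C a ta \<and>
     (\<forall>b tb. svmplus_feasible y C b tb \<longrightarrow>
        svmF y K a + (1/\<gamma>) * svmFt Kt ta \<le> svmF y K b + (1/\<gamma>) * svmFt Kt tb)"

definition wsvm_feasible :: "real ^ 'n \<Rightarrow> real ^ 'n \<Rightarrow> real ^ 'n \<Rightarrow> bool" where
  "wsvm_feasible y c a \<longleftrightarrow> y \<bullet> a = 0 \<and> (\<forall>i. 0 \<le> a $ i \<and> a $ i \<le> c $ i)"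

definition wsvm_solution :: "real ^ 'n \<Rightarrow> real ^ 'n ^ 'n \<Rightarrow> real ^ 'n \<Rightarrow> real ^ 'n \<Rightarrow> bool" where
  "wsvm_solution y K c a \<longleftrightarrow> wsvm_feasible y c a \<and>
     (\<forall>b. wsvm_feasible y c b \<longrightarrow> svmF y K a \<le> svmF y K b)"

end

theory Submission
  imports Defs
begin

text \<open>Both objectives are convex quadratics over convex feasible sets. For two minimisers
  with the common optimal value, the midpoint is feasible and, by the parallelogram law, its
  objective value falls short of the optimum by a nonnegative combination of the quadratic forms
  of the differences; hence these quadratic forms vanish. For a positive semidefinite symmetric
  matrix this forces the difference into the null space, so the quadratic parts of the two
  solutions coincide and, the optimal values being equal, so do the linear parts
  \<open>1 \<bullet> \<alpha>\<close>. The remaining orthogonality relations are linear equality constraints.\<close>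

abbreviation quad_form :: "real ^ 'n ^ 'n \<Rightarrow> real ^ 'n \<Rightarrow> real" where
  "quad_form M x \<equiv> x \<bullet> (M *v x)"

lemma symmetric_matrix_inner_commute:
  fixes M :: "real ^ 'n ^ 'n"
  assumes "transpose M = M"
  shows "x \<bullet> (M *v z) = z \<bullet> (M *v x)"
  by (metis assms dot_lmul_matrix inner_commute vector_transpose_matrix)

lemma quad_form_add:
  fixes M :: "real ^ 'n ^ 'n"
  assumes "transpose M = M"
  shows "quad_form M (a + b) = quad_form M a + 2 * (b \<bullet> (M *v a)) + quad_form M b"
  using symmetric_matrix_inner_commute[OF assms, of a b]
  by (simp add: matrix_vector_right_distrib inner_add_left inner_add_right)

lemma quad_form_scaleR: "quad_form M (t *\<^sub>R x) = t\<^sup>2 * quad_form M x"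
  by (simp add: matrix_vector_mult_scaleR power2_eq_square)

lemma quad_form_midpoint:
  fixes M :: "real ^ 'n ^ 'n"
  assumes "transpose M = M"
  shows "quad_form M (midpoint a b) = (quad_form M a + quad_form M b) / 2 - quad_form M (a - b) / 4"
proof -
  have "quad_form M (a - b) = quad_form M a - 2 * (b \<bullet> (M *v a)) + quad_form M b"
    using quad_form_add[OF assms, of a "- b"] matrix_vector_mult_scaleR[of M "-1" b] by simp
  then show ?thesis
    unfolding midpoint_def quad_form_scaleR quad_form_add[OF assms]
    by (simp add: power2_eq_square field_simps)
qed

lemma psd_quad_form_nonneg: "psd M \<Longrightarrow> 0 \<le> quad_form M x"
  unfolding psd_def by simp

lemma psd_quad_form_eq_0_imp_null:
  fixes M :: "real ^ 'n ^ 'n"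
  assumes sym: "transpose M = M" and "psd M" and x: "quad_form M x = 0"
  shows "M *v x = 0"
proof (rule ccontr)
  define z where "z = M *v x"
  define t where "t = (z \<bullet> z) / (quad_form M z + 1)"
  assume "M *v x \<noteq> 0"
  then have zz: "z \<bullet> z > 0" by (simp add: z_def)
  have "quad_form M z \<ge> 0" using \<open>psd M\<close> by (rule psd_quad_form_nonneg)
  then have t: "t > 0" and t_r: "t * (quad_form M z + 1) = z \<bullet> z"
    using zz by (simp_all add: t_def)
  \<comment> \<open>moving from \<open>x\<close> against \<open>M x\<close> would make the form negative\<close>
  have "quad_form M (x + (- t) *\<^sub>R z) = - 2 * t * (z \<bullet> z) + t\<^sup>2 * quad_form M z"
    unfolding quad_form_add[OF sym] quad_form_scaleR using x by (simp add: z_def)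
  also have "\<dots> \<le> - t * (z \<bullet> z)"
    using t_r t zz by (simp add: power2_eq_square algebra_simps)
  also have "\<dots> < 0" using t zz by simp
  finally show False using psd_quad_form_nonneg[OF \<open>psd M\<close>] by (simp add: not_le[symmetric])
qed

lemma quad_form_eq_if_diff_in_null:
  fixes M :: "real ^ 'n ^ 'n"
  assumes sym: "transpose M = M" and null: "M *v (a - b) = 0"
  shows "quad_form M a = quad_form M b"
proof -
  have "(a - b) \<bullet> (M *v b) = 0"
    using symmetric_matrix_inner_commute[OF sym, of "a - b" b] null by simp
  then show ?thesis
    using quad_form_add[OF sym, of b "a - b"] null by simp
qed

lemma transpose_diag_mat: "transpose (diag_mat y) = diag_mat y"
  unfolding diag_mat_def transpose_def by (simp add: vec_eq_iff)

lemma transpose_diag_conj: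
  assumes "transpose K = K"
  shows "transpose (diag_mat y ** K ** diag_mat y) = diag_mat y ** K ** diag_mat y"
  by (simp add: matrix_transpose_mul transpose_diag_mat assms matrix_mul_assoc)

lemma psd_diag_conj:
  fixes K :: "real ^ 'n ^ 'n"
  assumes "psd K"
  shows "psd (diag_mat y ** K ** diag_mat y)"
  unfolding psd_def
proof
  fix x :: "real ^ 'n"
  have "quad_form (diag_mat y ** K ** diag_mat y) x = quad_form K (diag_mat y *v x)"
    by (metis dot_lmul_matrix matrix_vector_mul_assoc transpose_diag_mat vector_transpose_matrix)
  then show "0 \<le> quad_form (diag_mat y ** K ** diag_mat y) x"
    using assms unfolding psd_def by simp
qed

lemma svmF_midpoint:
  assumes "transpose K = K"
  shows "svmF y K (midpoint a b) = (svmF y K a + svmF y K b) / 2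
          - quad_form (diag_mat y ** K ** diag_mat y) (a - b) / 8"
  unfolding svmF_def quad_form_midpoint[OF transpose_diag_conj[OF assms]]
  by (simp add: midpoint_def inner_add_right field_simps)

lemma svmFt_midpoint:
  assumes "transpose Kt = Kt"
  shows "svmFt Kt (midpoint a b) = (svmFt Kt a + svmFt Kt b) / 2 - quad_form Kt (a - b) / 8"
  unfolding svmFt_def quad_form_midpoint[OF assms] by (simp add: field_simps)

lemma svmF_eq_imp_inner_1_eq:
  assumes "transpose K = K" and "diag_mat y ** K ** diag_mat y *v (a - b) = 0"
    and "svmF y K a = svmF y K b"
  shows "1 \<bullet> (a - b) = 0"
  using assms quad_form_eq_if_diff_in_null[OF transpose_diag_conj[OF assms(1)]]
  by (simp add: svmF_def inner_diff_right)

lemma svmplus_feasible_midpoint: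
  assumes "svmplus_feasible y C a ta" and "svmplus_feasible y C b tb"
  shows "svmplus_feasible y C (midpoint a b) (midpoint ta tb)"
proof -
  have "0 \<le> (a $ i + b $ i) / 2 \<and> (a $ i + b $ i) / 2 \<le> C + (ta $ i + tb $ i) / 2" for i
    using assms[unfolded svmplus_feasible_def, THEN conjunct2, THEN conjunct2, rule_format, of i]
    by (simp add: field_simps)
  then show ?thesis
    using assms by (simp add: svmplus_feasible_def midpoint_def inner_add_right)
qed

lemma wsvm_feasible_midpoint:
  assumes "wsvm_feasible y c a" and "wsvm_feasible y c b"
  shows "wsvm_feasible y c (midpoint a b)"
proof -
  have "0 \<le> (a $ i + b $ i) / 2 \<and> (a $ i + b $ i) / 2 \<le> c $ i" for i
    using assms[unfolded wsvm_feasible_def, THEN conjunct2, rule_format, of i] by (simp add: field_simps)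
  then show ?thesis
    using assms by (simp add: wsvm_feasible_def midpoint_def inner_add_right)
qed

lemma svmplus_solutions_diff:
  assumes K: "transpose K = K" "psd K" and Kt: "transpose Kt = Kt" "psd Kt" and "\<gamma> > 0"
    and sol1: "svmplus_solution y K Kt C \<gamma> a1 ta1" and sol2: "svmplus_solution y K Kt C \<gamma> a2 ta2"
  shows "a1 - a2 \<in> null_space (diag_mat y ** K ** diag_mat y) \<inter> orth_compl 1 \<inter> orth_compl y"
    and "ta1 - ta2 \<in> null_space Kt \<inter> orth_compl 1"
proof -
  let ?M = "diag_mat y ** K ** diag_mat y"
  have M: "transpose ?M = ?M" "psd ?M" using transpose_diag_conj[OF K(1)] psd_diag_conj[OF K(2)] .
  define G where "G a ta = svmF y K a + (1/\<gamma>) * svmFt Kt ta" for a ta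
  have feas: "svmplus_feasible y C a1 ta1" "svmplus_feasible y C a2 ta2"
    using sol1 sol2 by (simp_all add: svmplus_solution_def)
  have opt: "G a1 ta1 \<le> G b tb" "G a2 ta2 \<le> G b tb" if "svmplus_feasible y C b tb" for b tb
    using sol1 sol2 that by (simp_all add: svmplus_solution_def G_def)
  have G_eq: "G a1 ta1 = G a2 ta2"
    using opt(1)[OF feas(2)] opt(2)[OF feas(1)] by simp
  define dM where "dM = quad_form ?M (a1 - a2)"
  define dt where "dt = (1/\<gamma>) * quad_form Kt (ta1 - ta2)"
  have d_nonneg: "0 \<le> dM" "0 \<le> dt"
    using psd_quad_form_nonneg[OF M(2)] psd_quad_form_nonneg[OF Kt(2)] \<open>\<gamma> > 0\<close>
    by (simp_all add: dM_def dt_def)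
  have "G a1 ta1 \<le> G (midpoint a1 a2) (midpoint ta1 ta2)"
    by (rule opt(1)[OF svmplus_feasible_midpoint[OF feas]])
  also have "\<dots> = (G a1 ta1 + G a2 ta2) / 2 - dM / 8 - dt / 8"
    by (simp add: G_def dM_def dt_def svmF_midpoint[OF K(1)] svmFt_midpoint[OF Kt(1)]
        right_diff_distrib add_divide_distrib)
  finally have "dM + dt \<le> 0" using G_eq by (simp add: field_simps)
  then have "dM = 0" "dt = 0" using d_nonneg by auto
  then have "quad_form ?M (a1 - a2) = 0" "quad_form Kt (ta1 - ta2) = 0"
    using \<open>\<gamma> > 0\<close> by (simp_all add: dM_def dt_def)
  then have null: "?M *v (a1 - a2) = 0" "Kt *v (ta1 - ta2) = 0"
    using psd_quad_form_eq_0_imp_null[OF M] psd_quad_form_eq_0_imp_null[OF Kt] by blast+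
  have "svmF y K a1 = svmF y K a2"
    using G_eq quad_form_eq_if_diff_in_null[OF Kt(1) null(2)] by (simp add: G_def svmFt_def)
  then have "1 \<bullet> (a1 - a2) = 0" by (rule svmF_eq_imp_inner_1_eq[OF K(1) null(1)])
  with null feas show "a1 - a2 \<in> null_space ?M \<inter> orth_compl 1 \<inter> orth_compl y"
    and "ta1 - ta2 \<in> null_space Kt \<inter> orth_compl 1"
    by (simp_all add: null_space_def orth_compl_def svmplus_feasible_def inner_diff_right)
qed

lemma wsvm_solutions_diff:
  assumes K: "transpose K = K" "psd K"
    and sol1: "wsvm_solution y K c a1" and sol2: "wsvm_solution y K c a2"
  shows "a1 - a2 \<in> null_space (diag_mat y ** K ** diag_mat y) \<inter> orth_compl 1 \<inter> orth_compl y"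
proof -
  let ?M = "diag_mat y ** K ** diag_mat y"
  have M: "transpose ?M = ?M" "psd ?M" using transpose_diag_conj[OF K(1)] psd_diag_conj[OF K(2)] .
  have feas: "wsvm_feasible y c a1" "wsvm_feasible y c a2"
    using sol1 sol2 by (simp_all add: wsvm_solution_def)
  have opt: "svmF y K a1 \<le> svmF y K b" "svmF y K a2 \<le> svmF y K b" if "wsvm_feasible y c b" for b
    using sol1 sol2 that by (simp_all add: wsvm_solution_def)
  have F_eq: "svmF y K a1 = svmF y K a2"
    using opt(1)[OF feas(2)] opt(2)[OF feas(1)] by simp
  have "svmF y K a1 \<le> svmF y K (midpoint a1 a2)"
    by (rule opt(1)[OF wsvm_feasible_midpoint[OF feas]])
  also have "\<dots> = svmF y K a1 - quad_form ?M (a1 - a2) / 8"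
    using F_eq by (simp add: svmF_midpoint[OF K(1)])
  finally have "quad_form ?M (a1 - a2) = 0"
    using psd_quad_form_nonneg[OF M(2), of "a1 - a2"] by simp
  then have null: "?M *v (a1 - a2) = 0" by (rule psd_quad_form_eq_0_imp_null[OF M])
  have "1 \<bullet> (a1 - a2) = 0" by (rule svmF_eq_imp_inner_1_eq[OF K(1) null F_eq])
  with null feas show ?thesis
    by (simp add: null_space_def orth_compl_def wsvm_feasible_def inner_diff_right)
qed

theorem proposition3:
  fixes y :: "real ^ 'n" and K Kt :: "real ^ 'n ^ 'n" and C \<gamma> :: real
  assumes y_pm: "\<forall>i. y $ i = 1 \<or> y $ i = -1"
    and K_sym: "transpose K = K" and K_psd: "psd K"
    and Kt_sym: "transpose Kt = Kt" and Kt_psd: "psd Kt"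
    and C_pos: "C > 0" and gamma_pos: "\<gamma> > 0"
  shows "(\<forall>a1 ta1 a2 ta2.
            svmplus_solution y K Kt C \<gamma> a1 ta1 \<and> svmplus_solution y K Kt C \<gamma> a2 ta2 \<longrightarrow>
            a1 - a2 \<in> null_space (diag_mat y ** K ** diag_mat y) \<inter> orth_compl 1 \<inter> orth_compl y \<and>
            ta1 - ta2 \<in> null_space Kt \<inter> orth_compl 1)
       \<and> (\<forall>c a1 a2. (\<forall>i. 0 \<le> c $ i) \<and> wsvm_solution y K c a1 \<and> wsvm_solution y K c a2 \<longrightarrow>
            a1 - a2 \<in> null_space (diag_mat y ** K ** diag_mat y) \<inter> orth_compl 1 \<inter> orth_compl y)"
  using svmplus_solutions_diff[OF K_sym K_psd Kt_sym Kt_psd gamma_pos]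
    wsvm_solutions_diff[OF K_sym K_psd] by blast

end
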